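(* Let $V$ be a Majorana algebra with a set $A$ of Majorana axes generating $V$. Then the group $G = \langle \tau(a) \mid a \in A\rangle$ acts faithfully on $A$.
   Context: Let $V$ be a real vector space with a positive definite symmetric bilinear form $(\,,\,)$ and a bilinear commutative (non-associative) product $\cdot$ such that (M1) $(u, v\cdot w) = (u\cdot v, w)$ and (M2) $(u\cdot u, v\cdot v)\ge (u\cdot v, u\cdot v)$ for all $u,v,w \in V$. For $a \in V$ write $V_\mu^{(a)} = \{v : a\cdot v = \mu v\}$. A Majorana axis is a nonzero $a\in V$ with: (M3) $(a,a)=1$, $a\cdot a=a$; (M4) $V = V_1^{(a)}\oplus V_0^{(a)}\oplus V_{1/4}^{(a)} \oplus V_{1/32}^{(a)}$; (M5) $V_1^{(a)}=\mathbb{R}a$; (M6) the linear map $\tau(a)$ acting as $+1$ on $V_1^{(a)}\oplus V_0^{(a)}\oplus V_{1/4}^{(a)}$ and $-1$ on $V_{1/32}^{(a)}$ is an algebra automorphism; (M7) on $V_+^{(a)}=V_1^{(a)}\oplus V_0^{(a)}\oplus V_{1/4}^{(a)}$ the map acting as $+1$ on $V_1^{(a)}\oplus V_0^{(a)}$ and $-1$ on $V_{1/4}^{(a)}$ preserves the product restricted to $V_+^{(a)}$. A Majorana algebra is such a $V$ generated as an algebra by a set $A$ of Majorana axes. Standing convention: the set $A$ is assumed closed under the action of $G=\langle \tau(a)\mid a\in A\rangle$ (acting on the right). *)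

theory Defs
  imports "HOL-Analysis.Analysis"
begin

text \<open>The ambient space V is a type of class real_inner; its inner product is the
positive definite symmetric bilinear form. The algebra product is a parameter prd.\<close>

definition eigsp :: "('v::real_vector \<Rightarrow> 'v \<Rightarrow> 'v) \<Rightarrow> 'v \<Rightarrow> real \<Rightarrow> 'v set" where
  "eigsp prd a \<mu> = {v. prd a v = \<mu> *\<^sub>R v}"

definition Vplus :: "('v::real_vector \<Rightarrow> 'v \<Rightarrow> 'v) \<Rightarrow> 'v \<Rightarrow> 'v set" where
  "Vplus prd a = {x + y + z | x y z. x \<in> eigsp prd a 1 \<and> y \<in> eigsp prd a 0 \<and> z \<in> eigsp prd a (1/4)}"

definition tau :: "('v::real_vector \<Rightarrow> 'v \<Rightarrow> 'v) \<Rightarrow> 'v \<Rightarrow> 'v \<Rightarrow> 'v" where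
  "tau prd a v = (SOME w. \<exists>x y. x \<in> Vplus prd a \<and> y \<in> eigsp prd a (1/32) \<and> v = x + y \<and> w = x - y)"

definition sigma :: "('v::real_vector \<Rightarrow> 'v \<Rightarrow> 'v) \<Rightarrow> 'v \<Rightarrow> 'v \<Rightarrow> 'v" where
  "sigma prd a v = (SOME w. \<exists>x y z. x \<in> eigsp prd a 1 \<and> y \<in> eigsp prd a 0 \<and> z \<in> eigsp prd a (1/4)
                       \<and> v = x + y + z \<and> w = x + y - z)"

definition majorana_axis :: "('v::real_inner \<Rightarrow> 'v \<Rightarrow> 'v) \<Rightarrow> 'v \<Rightarrow> bool" where
  "majorana_axis prd a \<longleftrightarrow>
     a \<noteq> 0 \<and>
     inner a a = 1 \<and> prd a a = a \<and>
     (\<forall>v. \<exists>v1 v0 v4 v32. v1 \<in> eigsp prd a 1 \<and> v0 \<in> eigsp prd a 0 \<and> v4 \<in> eigsp prd a (1/4)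
            \<and> v32 \<in> eigsp prd a (1/32) \<and> v = v1 + v0 + v4 + v32) \<and>
     eigsp prd a 1 = {c *\<^sub>R a | c. True} \<and>
     (bij (tau prd a) \<and> linear (tau prd a) \<and>
        (\<forall>u v. tau prd a (prd u v) = prd (tau prd a u) (tau prd a v))) \<and>
     (\<forall>u\<in>Vplus prd a. \<forall>v\<in>Vplus prd a. sigma prd a (prd u v) = prd (sigma prd a u) (sigma prd a v))"

inductive_set alg_gen :: "('v::real_vector \<Rightarrow> 'v \<Rightarrow> 'v) \<Rightarrow> 'v set \<Rightarrow> 'v set"
  for prd :: "'v \<Rightarrow> 'v \<Rightarrow> 'v" and S :: "'v set" where
  base: "a \<in> S \<Longrightarrow> a \<in> alg_gen prd S"
| zero: "0 \<in> alg_gen prd S"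
| add: "x \<in> alg_gen prd S \<Longrightarrow> y \<in> alg_gen prd S \<Longrightarrow> x + y \<in> alg_gen prd S"
| scale: "x \<in> alg_gen prd S \<Longrightarrow> c *\<^sub>R x \<in> alg_gen prd S"
| mult: "x \<in> alg_gen prd S \<Longrightarrow> y \<in> alg_gen prd S \<Longrightarrow> prd x y \<in> alg_gen prd S"

inductive_set gen_group :: "('v \<Rightarrow> 'v) set \<Rightarrow> ('v \<Rightarrow> 'v) set"
  for T :: "('v \<Rightarrow> 'v) set" where
  ident: "id \<in> gen_group T"
| gen: "t \<in> T \<Longrightarrow> g \<in> gen_group T \<Longrightarrow> t \<circ> g \<in> gen_group T"
| geninv: "t \<in> T \<Longrightarrow> g \<in> gen_group T \<Longrightarrow> inv t \<circ> g \<in> gen_group T"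

definition majorana_algebra :: "('v::real_inner \<Rightarrow> 'v \<Rightarrow> 'v) \<Rightarrow> 'v set \<Rightarrow> bool" where
  "majorana_algebra prd A \<longleftrightarrow>
     bilinear prd \<and> (\<forall>u v. prd u v = prd v u) \<and>
     (\<forall>u v w. inner u (prd v w) = inner (prd u v) w) \<and>
     (\<forall>u v. inner (prd u u) (prd v v) \<ge> inner (prd u v) (prd u v)) \<and>
     (\<forall>a\<in>A. majorana_axis prd a) \<and>
     alg_gen prd A = UNIV"

definition tau_group :: "('v::real_vector \<Rightarrow> 'v \<Rightarrow> 'v) \<Rightarrow> 'v set \<Rightarrow> ('v \<Rightarrow> 'v) set" where
  "tau_group prd A = gen_group (tau prd ` A)"

end

theory Submission
  imports Defs
begin

text \<open>By (M6) every \<open>\<tau>(a)\<close> is a bijective algebra endomorphism, and such maps are closed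
under composition and inversion, so all of \<open>G\<close> consists of algebra automorphisms of \<open>V\<close>.
Two endomorphisms that agree on a generating set agree on the subalgebra it generates;
hence an element of \<open>G\<close> fixing \<open>A\<close> pointwise fixes \<open>V\<close>, i.e. it is the identity.\<close>

definition algebra_hom :: "('v::real_vector \<Rightarrow> 'v \<Rightarrow> 'v) \<Rightarrow> ('v \<Rightarrow> 'v) \<Rightarrow> bool" where
  "algebra_hom prd f \<longleftrightarrow> linear f \<and> (\<forall>u v. f (prd u v) = prd (f u) (f v))"

lemma algebra_hom_id: "algebra_hom prd id"
  by (simp add: algebra_hom_def linear_iff)

lemma algebra_hom_comp:
  "algebra_hom prd f \<Longrightarrow> algebra_hom prd g \<Longrightarrow> algebra_hom prd (f \<circ> g)"
  by (simp add: algebra_hom_def linear_compose)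

lemma bij_linear_imp_inv_linear:
  assumes f: "linear f" and bij: "bij f"
  shows "linear (inv f)"
proof (rule linearI)
  have inj: "inj f" and f_inv: "\<And>x. f (inv f x) = x"
    using bij by (simp_all add: bij_is_inj bij_is_surj surj_f_inv_f)
  show "inv f (x + y) = inv f x + inv f y" for x y
    by (rule inv_f_eq[OF inj]) (simp add: linear_add[OF f] f_inv)
  show "inv f (c *\<^sub>R x) = c *\<^sub>R inv f x" for c x
    by (rule inv_f_eq[OF inj]) (simp add: linear_scale[OF f] f_inv)
qed

lemma algebra_hom_inv:
  assumes f: "algebra_hom prd f" and bij: "bij f"
  shows "algebra_hom prd (inv f)"
proof -
  have inj: "inj f" and f_inv: "\<And>x. f (inv f x) = x"
    using bij by (simp_all add: bij_is_inj bij_is_surj surj_f_inv_f)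
  have "inv f (prd u v) = prd (inv f u) (inv f v)" for u v
    by (rule inv_f_eq[OF inj]) (use f in \<open>simp add: algebra_hom_def f_inv\<close>)
  moreover have "linear (inv f)"
    using f bij by (simp add: algebra_hom_def bij_linear_imp_inv_linear)
  ultimately show ?thesis
    by (simp add: algebra_hom_def)
qed

lemma gen_group_algebra_hom:
  assumes "\<forall>t\<in>T. bij t \<and> algebra_hom prd t" and "g \<in> gen_group T"
  shows "algebra_hom prd g"
  using assms(2)
proof induction
  case ident
  show ?case by (rule algebra_hom_id)
next
  case (gen t g)
  then show ?case using assms(1) algebra_hom_comp by blast
next
  case (geninv t g)
  then show ?case using assms(1) algebra_hom_comp algebra_hom_inv by blast
qed

lemma majorana_axis_tau:
  assumes "majorana_axis prd a"
  shows "bij (tau prd a)" and "algebra_hom prd (tau prd a)"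
  using assms by (simp_all add: majorana_axis_def algebra_hom_def)

lemma tau_group_algebra_hom:
  assumes "\<forall>a\<in>A. majorana_axis prd a" and "g \<in> tau_group prd A"
  shows "algebra_hom prd g"
proof (rule gen_group_algebra_hom)
  show "\<forall>t\<in>tau prd ` A. bij t \<and> algebra_hom prd t"
    using assms(1) majorana_axis_tau by blast
  show "g \<in> gen_group (tau prd ` A)"
    using assms(2) by (simp add: tau_group_def)
qed

lemma algebra_hom_eq_on_alg_gen:
  assumes f: "algebra_hom prd f" and g: "algebra_hom prd g"
    and eq: "\<forall>a\<in>S. f a = g a" and x: "x \<in> alg_gen prd S"
  shows "f x = g x"
  using x
proof induction
  case (base a)
  then show ?case using eq by simp
next
  case zero
  show ?case using f g by (simp add: algebra_hom_def linear_0)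
next
  case (add x y)
  then show ?case using f g by (simp add: algebra_hom_def linear_add)
next
  case (scale x c)
  then show ?case using f g by (simp add: algebra_hom_def linear_scale)
next
  case (mult x y)
  then show ?case using f g by (simp add: algebra_hom_def)
qed

theorem mainTheorem5:
  fixes prd :: "'v::real_inner \<Rightarrow> 'v \<Rightarrow> 'v" and A :: "'v set"
  assumes "majorana_algebra prd A"
    and "\<forall>g\<in>tau_group prd A. \<forall>a\<in>A. g a \<in> A"
  shows "\<forall>g\<in>tau_group prd A. (\<forall>a\<in>A. g a = a) \<longrightarrow> g = id"
proof (intro ballI impI)
  fix g
  assume g: "g \<in> tau_group prd A" and fixes_A: "\<forall>a\<in>A. g a = a"
  have axes: "\<forall>a\<in>A. majorana_axis prd a" and generates: "alg_gen prd A = UNIV"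
    using assms(1) unfolding majorana_algebra_def by auto
  have "algebra_hom prd g"
    using tau_group_algebra_hom[OF axes g] .
  then have "g v = id v" for v
    using algebra_hom_eq_on_alg_gen[OF _ algebra_hom_id, of prd g A v] fixes_A generates by simp
  then show "g = id" ..
qed

end
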